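(* Let $\psi$ and $\tilde\psi$ be twice differentiable, increasing, nonvanishing functions on $(0,\infty)$ (not necessarily complete Bernstein functions). For $\lambda>0$ define \[\vartheta_\lambda=\frac1\pi\int_0^1\frac{1}{1-\zeta^2}\log\frac{\psi_\lambda(\lambda^2/\zeta^2)}{\psi_\lambda(\lambda^2\zeta^2)}\,d\zeta,\] and define $\tilde\vartheta_\lambda$ in the same way using $\tilde\psi_\lambda$; assume these integrals converge and are finite. If $-\psi''(\xi)/\psi'(\xi)\le-\tilde\psi''(\xi)/\tilde\psi'(\xi)$ for all $\xi>0$, then $\vartheta_\lambda\le\tilde\vartheta_\lambda$ for all $\lambda>0$.
   Context: For $\lambda,\xi>0$, $\xi\ne\lambda^2$, $\psi_\lambda(\xi)=\dfrac{1-\xi/\lambda^2}{1-\psi(\xi)/\psi(\lambda^2)}$, extended continuously by $\psi_\lambda(\lambda^2)=\psi(\lambda^2)/(\lambda^2\psi'(\lambda^2))$; $\tilde\psi_\lambda$ is defined analogously from $\tilde\psi$. *)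

theory Defs
  imports "HOL-Analysis.Analysis"
begin

definition psi_lam :: "(real \<Rightarrow> real) \<Rightarrow> real \<Rightarrow> real \<Rightarrow> real" where
  "psi_lam \<psi> lam \<xi> =
     (if \<xi> = lam\<^sup>2 then \<psi> (lam\<^sup>2) / (lam\<^sup>2 * deriv \<psi> (lam\<^sup>2))
      else (1 - \<xi> / lam\<^sup>2) / (1 - \<psi> \<xi> / \<psi> (lam\<^sup>2)))"

definition theta_integrand :: "(real \<Rightarrow> real) \<Rightarrow> real \<Rightarrow> real \<Rightarrow> real" where
  "theta_integrand \<psi> lam \<zeta> =
     1 / (1 - \<zeta>\<^sup>2) * ln (psi_lam \<psi> lam (lam\<^sup>2 / \<zeta>\<^sup>2) / psi_lam \<psi> lam (lam\<^sup>2 * \<zeta>\<^sup>2))"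

text \<open>vartheta_lambda = (1/pi) * integral over (0,1) (Henstock-Kurzweil, which covers
  convergent improper integrals).\<close>
definition vartheta :: "(real \<Rightarrow> real) \<Rightarrow> real \<Rightarrow> real" where
  "vartheta \<psi> lam = 1 / pi * integral {0..1} (theta_integrand \<psi> lam)"

end

theory Submission
  imports Defs
begin

text \<open>For \<open>0 < a < t < b\<close> with \<open>t = \<lambda>\<^sup>2\<close>, \<open>a = \<lambda>\<^sup>2\<zeta>\<^sup>2\<close>, \<open>b = \<lambda>\<^sup>2/\<zeta>\<^sup>2\<close>, the quotient
  \<open>\<psi>\<^sub>\<lambda>(b)/\<psi>\<^sub>\<lambda>(a)\<close> equals \<open>(\<psi> t - \<psi> a)(b - t) / ((\<psi> b - \<psi> t)(t - a))\<close>, so it suffices to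
  compare the increment ratios \<open>(\<psi> t - \<psi> a)/(\<psi> b - \<psi> t)\<close> pointwise. By Cauchy's mean value
  theorem they equal \<open>(\<psi>'/\<tilde>\<psi>')(c)\<close> and \<open>(\<psi>'/\<tilde>\<psi>')(d)\<close> times the corresponding increments of
  \<open>\<tilde>\<psi>\<close>, with \<open>c < t < d\<close>; the hypothesis on \<open>-\<psi>''/\<psi>'\<close> says exactly that \<open>\<psi>'/\<tilde>\<psi>'\<close> is
  nondecreasing.\<close>

lemma deriv_pos_if_mono_on:
  fixes h :: "real \<Rightarrow> real"
  assumes "mono_on A h" "h differentiable (at x)" "x \<in> interior A" "deriv h x \<noteq> 0"
  shows "deriv h x > 0"
proof -
  have "deriv h x \<ge> 0"
    using assms
    by (intro mono_on_imp_deriv_nonneg[of A h])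
      (auto intro: DERIV_deriv_iff_real_differentiable[THEN iffD2])
  with assms(4) show ?thesis by simp
qed

lemma mono_on_quotient_if_wronskian_nonneg:
  fixes u v u' v' :: "real \<Rightarrow> real"
  assumes "is_interval I"
    and du: "\<And>x. x \<in> I \<Longrightarrow> (u has_real_derivative u' x) (at x)"
    and dv: "\<And>x. x \<in> I \<Longrightarrow> (v has_real_derivative v' x) (at x)"
    and v_pos: "\<And>x. x \<in> I \<Longrightarrow> v x > 0"
    and wronskian: "\<And>x. x \<in> I \<Longrightarrow> u x * v' x \<le> u' x * v x"
  shows "mono_on I (\<lambda>x. u x / v x)"
proof (rule mono_onI)
  fix c d assume cd: "c \<in> I" "d \<in> I" "c \<le> d"
  show "u c / v c \<le> u d / v d"
  proof (rule DERIV_nonneg_imp_nondecreasing[OF \<open>c \<le> d\<close>])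
    fix x assume "c \<le> x" "x \<le> d"
    with cd \<open>is_interval I\<close> have x: "x \<in> I"
      unfolding is_interval_1 by blast
    have "((\<lambda>x. u x / v x) has_real_derivative
        (u' x * v x - u x * v' x) / (v x * v x)) (at x)"
      using DERIV_divide[OF du[OF x] dv[OF x]] v_pos[OF x] by simp
    moreover have "(u' x * v x - u x * v' x) / (v x * v x) \<ge> 0"
      using wronskian[OF x] by simp
    ultimately show "\<exists>y. ((\<lambda>x. u x / v x) has_real_derivative y) (at x) \<and> 0 \<le> y"
      by blast
  qed
qed

lemma increment_ratio_le_if_mono_on_derivative_quotient:
  fixes f g f' g' :: "real \<Rightarrow> real"
  assumes abt: "a < t" "t < b"
    and df: "\<And>x. x \<in> {a..b} \<Longrightarrow> (f has_real_derivative f' x) (at x)"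
    and dg: "\<And>x. x \<in> {a..b} \<Longrightarrow> (g has_real_derivative g' x) (at x)"
    and g'_pos: "\<And>x. x \<in> {a..b} \<Longrightarrow> g' x > 0"
    and mono: "mono_on {a..b} (\<lambda>x. f' x / g' x)"
  shows "(f t - f a) * (g b - g t) \<le> (g t - g a) * (f b - f t)"
proof -
  have cauchy: "\<exists>c. p < c \<and> c < q \<and> f q - f p = (g q - g p) * (f' c / g' c)"
    if pq: "a \<le> p" "p < q" "q \<le> b" for p q
  proof -
    obtain c where c: "p < c" "c < q" "(f q - f p) * g' c = (g q - g p) * f' c"
    proof (rule GMVT'[OF \<open>p < q\<close>, of f g g' f', THEN exE])
      fix z assume "p \<le> z" "z \<le> q"
      with pq have "z \<in> {a..b}" by simp
      then show "isCont f z" "isCont g z" by (auto intro: DERIV_isCont[OF df] DERIV_isCont[OF dg])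
    next
      fix z assume "p < z" "z < q"
      with pq show "(f has_real_derivative f' z) (at z)" "(g has_real_derivative g' z) (at z)"
        by (auto intro: df dg)
    qed blast
    moreover have "g' c > 0" using c pq g'_pos by simp
    ultimately show ?thesis by (auto simp: field_simps)
  qed
  obtain c where c: "a < c" "c < t" "f t - f a = (g t - g a) * (f' c / g' c)"
    using cauchy[of a t] abt by auto
  obtain d where d: "t < d" "d < b" "f b - f t = (g b - g t) * (f' d / g' d)"
    using cauchy[of t b] abt by auto
  have "g p < g q" if "a \<le> p" "p < q" "q \<le> b" for p q
  proof (rule DERIV_pos_imp_increasing[OF \<open>p < q\<close>])
    fix x assume "p \<le> x" "x \<le> q"
    with that have "x \<in> {a..b}" by simp
    then show "\<exists>y. (g has_real_derivative y) (at x) \<and> y > 0" using dg g'_pos by blast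
  qed
  then have "g a < g t" "g t < g b" using abt by auto
  then have "(g t - g a) * (g b - g t) \<ge> 0" by simp
  moreover have "f' c / g' c \<le> f' d / g' d"
    using mono c d abt by (auto intro: mono_onD)
  ultimately have "(g t - g a) * (g b - g t) * (f' c / g' c)
      \<le> (g t - g a) * (g b - g t) * (f' d / g' d)"
    by (intro mult_left_mono)
  then show ?thesis
    unfolding c(3) d(3) by (simp only: ac_simps)
qed

lemma psi_lam_ratio:
  fixes f :: "real \<Rightarrow> real"
  assumes "a \<noteq> lam\<^sup>2" "b \<noteq> lam\<^sup>2" "f a \<noteq> f (lam\<^sup>2)" "f b \<noteq> f (lam\<^sup>2)" "f (lam\<^sup>2) \<noteq> 0"
    and "lam \<noteq> 0"
  shows "psi_lam f lam b / psi_lam f lam a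
    = (f (lam\<^sup>2) - f a) / (f b - f (lam\<^sup>2)) * ((b - lam\<^sup>2) / (lam\<^sup>2 - a))"
proof -
  have "psi_lam f lam b / psi_lam f lam a
      = ((1 - b / lam\<^sup>2) / (1 - f b / f (lam\<^sup>2))) / ((1 - a / lam\<^sup>2) / (1 - f a / f (lam\<^sup>2)))"
    using assms unfolding psi_lam_def by simp
  also have "\<dots> = (f (lam\<^sup>2) - f a) / (f b - f (lam\<^sup>2)) * ((b - lam\<^sup>2) / (lam\<^sup>2 - a))"
    using assms by (simp add: divide_simps) (simp add: algebra_simps)
  finally show ?thesis .
qed

lemma theta_integrand_le:
  fixes f g :: "real \<Rightarrow> real"
  assumes lam: "lam > 0" and z: "z \<in> {0..1}"
    and f_inc: "strict_mono_on {0<..} f" and g_inc: "strict_mono_on {0<..} g"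
    and f_nz: "f (lam\<^sup>2) \<noteq> 0" and g_nz: "g (lam\<^sup>2) \<noteq> 0"
    and increments: "\<And>a t b. 0 < a \<Longrightarrow> a < t \<Longrightarrow> t < b \<Longrightarrow>
      (f t - f a) * (g b - g t) \<le> (g t - g a) * (f b - f t)"
  shows "theta_integrand f lam z \<le> theta_integrand g lam z"
proof (cases "z = 0 \<or> z = 1")
  case True
  \<comment> \<open>both sides vanish: \<open>1/(1 - 1) = 0\<close>, and for \<open>\<zeta> = 0\<close> both arguments
    of \<open>\<psi>\<^sub>\<lambda>\<close> are \<open>0\<close> since \<open>\<lambda>\<^sup>2/0 = 0\<close>\<close>
  then show ?thesis unfolding theta_integrand_def by auto
next
  case False
  with z have z2: "0 < z\<^sup>2" "z\<^sup>2 < 1" by (auto simp: power_less_one_iff)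
  define t a b where "t = lam\<^sup>2" and "a = lam\<^sup>2 * z\<^sup>2" and "b = lam\<^sup>2 / z\<^sup>2"
  have abt: "0 < a" "a < t" "t < b"
    unfolding a_def b_def t_def using lam z2 by (auto simp: field_simps)
  have increments_pos: "h t - h a > 0" "h b - h t > 0"
    if "strict_mono_on {0<..} h" for h :: "real \<Rightarrow> real"
    using that abt by (auto simp: strict_mono_on_def)
  have ratio: "psi_lam h lam b / psi_lam h lam a = (h t - h a) / (h b - h t) * ((b - t) / (t - a))"
    if "strict_mono_on {0<..} h" "h t \<noteq> 0" for h :: "real \<Rightarrow> real"
    using psi_lam_ratio[of a lam b h] increments_pos[OF that(1)] that(2) abt lam
    unfolding t_def by simp
  have "(f t - f a) / (f b - f t) \<le> (g t - g a) / (g b - g t)"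
    using increments[OF abt] increments_pos[OF f_inc] increments_pos[OF g_inc]
    by (simp add: divide_simps)
  then have "(f t - f a) / (f b - f t) * ((b - t) / (t - a))
      \<le> (g t - g a) / (g b - g t) * ((b - t) / (t - a))"
    using abt by (intro mult_right_mono) simp_all
  moreover have "(f t - f a) / (f b - f t) * ((b - t) / (t - a)) > 0"
    using increments_pos[OF f_inc] abt by simp
  ultimately have "ln (psi_lam f lam b / psi_lam f lam a) \<le> ln (psi_lam g lam b / psi_lam g lam a)"
    unfolding ratio[OF f_inc f_nz[folded t_def]] ratio[OF g_inc g_nz[folded t_def]] by simp
  with z2 show ?thesis
    unfolding theta_integrand_def a_def b_def by (simp add: divide_right_mono)
qed

theorem proposition4p1:
  fixes \<psi> \<psi>t :: "real \<Rightarrow> real"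
  assumes d1: "\<And>x. x > 0 \<Longrightarrow> \<psi> differentiable (at x)"
    and d2: "\<And>x. x > 0 \<Longrightarrow> deriv \<psi> differentiable (at x)"
    and dt1: "\<And>x. x > 0 \<Longrightarrow> \<psi>t differentiable (at x)"
    and dt2: "\<And>x. x > 0 \<Longrightarrow> deriv \<psi>t differentiable (at x)"
    and inc: "strict_mono_on {0<..} \<psi>"
    and inct: "strict_mono_on {0<..} \<psi>t"
    and nz: "\<And>x. x > 0 \<Longrightarrow> \<psi> x \<noteq> 0"
    and nzt: "\<And>x. x > 0 \<Longrightarrow> \<psi>t x \<noteq> 0"
    and dnz: "\<And>x. x > 0 \<Longrightarrow> deriv \<psi> x \<noteq> 0"
    and dnzt: "\<And>x. x > 0 \<Longrightarrow> deriv \<psi>t x \<noteq> 0"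
    and conv: "\<And>lam. lam > 0 \<Longrightarrow> theta_integrand \<psi> lam integrable_on {0..1}"
    and convt: "\<And>lam. lam > 0 \<Longrightarrow> theta_integrand \<psi>t lam integrable_on {0..1}"
    and cmp: "\<And>\<xi>. \<xi> > 0 \<Longrightarrow>
       - deriv (deriv \<psi>) \<xi> / deriv \<psi> \<xi> \<le> - deriv (deriv \<psi>t) \<xi> / deriv \<psi>t \<xi>"
  shows "\<forall>lam>0. vartheta \<psi> lam \<le> vartheta \<psi>t lam"
proof (intro allI impI)
  fix lam :: real assume lam: "lam > 0"
  note DERIV = DERIV_deriv_iff_real_differentiable[THEN iffD2]
  have deriv_pos: "deriv \<psi> x > 0" "deriv \<psi>t x > 0" if "x > 0" for x
    using that inc inct d1 dt1 dnz dnzt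
    by (auto intro!: deriv_pos_if_mono_on[of "{0<..}"] strict_mono_on_imp_mono_on simp: interior_open)
  have wronskian: "deriv \<psi> x * deriv (deriv \<psi>t) x \<le> deriv (deriv \<psi>) x * deriv \<psi>t x"
    if "x > 0" for x
    using cmp[OF that] deriv_pos[OF that] by (simp add: field_simps)
  have quotient_mono: "mono_on {0<..} (\<lambda>x. deriv \<psi> x / deriv \<psi>t x)"
    by (rule mono_on_quotient_if_wronskian_nonneg)
      (use DERIV d2 dt2 deriv_pos wronskian in auto)
  have "(\<psi> t - \<psi> a) * (\<psi>t b - \<psi>t t) \<le> (\<psi>t t - \<psi>t a) * (\<psi> b - \<psi> t)"
    if "0 < a" "a < t" "t < b" for a t b
  proof (rule increment_ratio_le_if_mono_on_derivative_quotient[where f' = "deriv \<psi>" and g' = "deriv \<psi>t"])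
    show "mono_on {a..b} (\<lambda>x. deriv \<psi> x / deriv \<psi>t x)"
      using quotient_mono by (rule mono_on_subset) (use that in auto)
  qed (use that DERIV d1 dt1 deriv_pos in auto)
  then have "theta_integrand \<psi> lam z \<le> theta_integrand \<psi>t lam z" if "z \<in> {0..1}" for z
    using theta_integrand_le[OF lam that inc inct] lam nz nzt by simp
  then have "integral {0..1} (theta_integrand \<psi> lam) \<le> integral {0..1} (theta_integrand \<psi>t lam)"
    by (intro integral_le conv convt lam)
  then show "vartheta \<psi> lam \<le> vartheta \<psi>t lam"
    unfolding vartheta_def by (simp add: divide_right_mono)
qed

end
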